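(* Let $q$ be a prime power, $F=\mathbb{F}_{q^2}$, $m\ge1$ with $\gcd(q,m)=1$, and $R=F[x]/\langle x^m-1\rangle$. Let $C\subseteq R^2$ be the quasi-cyclic code generated by one element $(g_{11}(x),g_{12}(x))$, where $g_{11}(x)\mid x^m-1$ and $\deg g_{12}<m$. Let $g(x)=\gcd(g_{11}(x),g_{12}(x))$. Then $C$ is Hermitian LCD if and only if $$\gcd\left(\frac{x^m-1}{g(x)},\ g_{11}(x)\hat g_{11}(x)+g_{12}(x)\hat g_{12}(x)\right)=1.$$
   Context: Elements of $R$ are represented by polynomials of degree $<m$ and identified with their coefficient vectors in $F^m$; a quasi-cyclic code of length $2m$ and index 2 is an $R$-submodule of $R^2$. The Hermitian inner product of $(a_1,a_2),(b_1,b_2)\in R^2$ is $\sum_k a_{1,k}b_{1,k}^q+\sum_k a_{2,k}b_{2,k}^q$, where $a_{i,k},b_{i,k}$ are the coefficients of $x^k$; $C$ is Hermitian LCD if $C\cap C^{\perp_h}=\{0\}$. For $f=\sum f_kx^k\in F[x]$ of degree at most $m$, $\hat f(x)=x^m f^{[q]}(x^{-1})$, where $f^{[q]}=\sum f_k^q x^k$. *)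

theory Defs
  imports "HOL-Computational_Algebra.Computational_Algebra"
begin

definition xm1 :: "nat \<Rightarrow> 'a::comm_ring_1 poly" where
  "xm1 m = monom 1 m - 1"

text \<open>Elements of R = F[x]/(x^m-1), represented by polynomials of degree < m.\<close>
definition Rset :: "nat \<Rightarrow> 'a::field poly set" where
  "Rset m = {p. degree p < m}"

definition qc_code_1gen :: "nat \<Rightarrow> 'a::field poly \<Rightarrow> 'a poly \<Rightarrow> ('a poly \<times> 'a poly) set" where
  "qc_code_1gen m g1 g2 = {((a * g1) mod xm1 m, (a * g2) mod xm1 m) | a. a \<in> Rset m}"

text \<open>Hermitian inner product on R^2 (coefficient vectors in F^m), with conjugation y \<mapsto> y^q.\<close>
definition herm_ip :: "nat \<Rightarrow> nat \<Rightarrow> ('a::field poly \<times> 'a poly) \<Rightarrow> ('a poly \<times> 'a poly) \<Rightarrow> 'a" where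
  "herm_ip q m u v =
     (\<Sum>k<m. coeff (fst u) k * coeff (fst v) k ^ q) + (\<Sum>k<m. coeff (snd u) k * coeff (snd v) k ^ q)"

definition herm_dual :: "nat \<Rightarrow> nat \<Rightarrow> ('a::field poly \<times> 'a poly) set \<Rightarrow> ('a poly \<times> 'a poly) set" where
  "herm_dual q m C = {v. fst v \<in> Rset m \<and> snd v \<in> Rset m \<and> (\<forall>c\<in>C. herm_ip q m c v = 0)}"

definition herm_LCD :: "nat \<Rightarrow> nat \<Rightarrow> ('a::field poly \<times> 'a poly) set \<Rightarrow> bool" where
  "herm_LCD q m C \<longleftrightarrow> C \<inter> herm_dual q m C = {(0, 0)}"

text \<open>hat f = x^m f^[q](x^{-1}) for deg f \<le> m: coefficient k is (f_{m-k})^q for k \<le> m.\<close>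
definition hat_poly :: "nat \<Rightarrow> nat \<Rightarrow> 'a::field poly \<Rightarrow> 'a poly" where
  "hat_poly q m f = (\<Sum>k\<le>m. monom (coeff f (m - k) ^ q) k)"

definition prime_power :: "nat \<Rightarrow> bool" where
  "prime_power q \<longleftrightarrow> (\<exists>p k. prime p \<and> k > 0 \<and> q = p ^ k)"

end

theory Submission
  imports Defs "HOL-Number_Theory.Residues"
begin

hide_const (open) up_ring.coeff up_ring.monom module.smult

text \<open>
  The map \<open>c \<mapsto> c ^ q\<close> is an involutive automorphism of \<open>F\<close>. Applying it to the
  coefficients and substituting \<open>x ^ (m - 1)\<close>, the inverse of \<open>x\<close> in \<open>R\<close>, gives an involutive
  ring automorphism \<open>f \<mapsto> f\<^sup>*\<close> of \<open>R\<close> which agrees with \<open>f \<mapsto> hat f\<close> for \<open>deg f \<le> m\<close>,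
  and the Hermitian product of \<open>u, v \<in> R\<^sup>2\<close> is the constant term of \<open>u\<^sub>1 v\<^sub>1\<^sup>* + u\<^sub>2 v\<^sub>2\<^sup>*\<close>.
  This functional is nondegenerate, so the codeword \<open>a (g\<^sub>1\<^sub>1, g\<^sub>1\<^sub>2)\<close> lies in the dual code
  exactly when \<open>x\<^sup>m - 1\<close> divides \<open>a h\<close> for the self-conjugate \<open>h = g\<^sub>1\<^sub>1 g\<^sub>1\<^sub>1\<^sup>* + g\<^sub>1\<^sub>2 g\<^sub>1\<^sub>2\<^sup>*\<close>,
  and it vanishes exactly when \<open>(x\<^sup>m - 1) / g\<close> divides \<open>a\<close>. So the code is LCD iff the
  annihilator of \<open>h\<close> modulo \<open>x\<^sup>m - 1\<close> is generated by \<open>(x\<^sup>m - 1) / g\<close>. As \<open>x\<^sup>m - 1\<close> is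
  squarefree for \<open>gcd(q, m) = 1\<close>, this says that \<open>(x\<^sup>m - 1) / g\<close> and \<open>h\<close> are coprime, and \<open>h\<close>
  may be replaced by \<open>g\<^sub>1\<^sub>1 hat g\<^sub>1\<^sub>1 + g\<^sub>1\<^sub>2 hat g\<^sub>1\<^sub>2\<close>, which is congruent to it.
\<close>

text \<open>The library version \<open>finite_field_power_card_eq_same\<close> needs the class \<open>finite_field\<close>,
  which a type of sort \<open>{finite, field}\<close> is not known to belong to.\<close>
lemma finite_field_power_card_eq_self:
  fixes x :: "'a::{finite,field}"
  shows "x ^ card (UNIV :: 'a set) = x"
proof -
  have card_pos: "card (UNIV :: 'a set) > 0" by (simp add: card_gt_0_iff)
  show ?thesis
  proof (cases "x = 0")
    case False
    let ?U = "UNIV - {0 :: 'a}"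
    have "(\<Prod>y\<in>?U. x * y) = (\<Prod>y\<in>?U. y)"
      by (rule prod.reindex_bij_witness[of _ "\<lambda>y. y / x" "\<lambda>y. x * y"]) (use False in auto)
    moreover have "(\<Prod>y\<in>?U. x * y) = x ^ (card (UNIV :: 'a set) - 1) * (\<Prod>y\<in>?U. y)"
      by (simp add: prod.distrib)
    moreover have "(\<Prod>y\<in>?U. y) \<noteq> 0" by simp
    ultimately have "x ^ (card (UNIV :: 'a set) - 1) = 1" by simp
    then have "x * x ^ (card (UNIV :: 'a set) - 1) = x" by simp
    then show ?thesis using card_pos by (simp flip: power_Suc)
  qed (use card_pos in simp)
qed

lemma dvd_mult_both_iff_div_gcd_dvd:
  fixes M g1 g2 :: "'a::{semiring_gcd,idom_divide}"
  assumes "g1 dvd M" and "M \<noteq> 0"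
  shows "M dvd a * g1 \<and> M dvd a * g2 \<longleftrightarrow> M div gcd g1 g2 dvd a"
proof -
  let ?g = "gcd g1 g2"
  have "?g dvd M" using assms(1) by (rule dvd_trans[OF gcd_dvd1])
  then have M: "M = M div ?g * ?g" by simp
  have "?g \<noteq> 0" using assms by auto
  have "M dvd a * g1 \<and> M dvd a * g2 \<longleftrightarrow> M dvd gcd (a * g1) (a * g2)" by simp
  also have "\<dots> \<longleftrightarrow> M div ?g * ?g dvd a * ?g" by (subst M) (simp add: gcd_mult_left)
  also have "\<dots> \<longleftrightarrow> M div ?g dvd a" using \<open>?g \<noteq> 0\<close> by (rule dvd_times_right_cancel_iff)
  finally show ?thesis .
qed

text \<open>A common factor \<open>d\<close> of \<open>M div g\<close> and \<open>h\<close> divides \<open>g\<close>, because \<open>M div d\<close>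
  annihilates \<open>h\<close>; hence \<open>d\<^sup>2\<close> divides \<open>M\<close>.\<close>
lemma squarefree_annihilator_iff_coprime:
  fixes M g h :: "'a::{semiring_gcd,idom_divide}"
  assumes "squarefree M" and "g dvd M"
  shows "(\<forall>r. M dvd r * h \<longrightarrow> M div g dvd r) \<longleftrightarrow> coprime (M div g) h"
proof
  define D where "D = M div g"
  have M: "M = D * g" using assms(2) by (simp add: D_def)
  have "D \<noteq> 0" using assms(1) M by auto
  assume annihilator: "\<forall>r. M dvd r * h \<longrightarrow> M div g dvd r"
  define d where "d = gcd D h"
  obtain D' where D': "D = d * D'" using gcd_dvd1 unfolding d_def by blast
  obtain h' where h': "h = d * h'" using gcd_dvd2 unfolding d_def by blast
  have "d \<noteq> 0" using \<open>D \<noteq> 0\<close> by (simp add: d_def)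
  have "M dvd (D' * g) * h" by (simp add: M D' h' mult_ac)
  then have "M div g dvd D' * g" using annihilator by blast
  then have "D' * d dvd D' * g" by (simp add: D_def[symmetric] D' mult.commute)
  moreover have "D' \<noteq> 0" using \<open>D \<noteq> 0\<close> D' by auto
  ultimately have "d dvd g" by simp
  then have "d ^ 2 dvd M" by (simp add: M power2_eq_square D' mult_dvd_mono)
  then have "is_unit d" by (rule squarefreeD[OF assms(1)])
  then show "coprime (M div g) h" unfolding d_def D_def by (rule is_unit_gcd[THEN iffD1])
next
  assume "coprime (M div g) h"
  moreover have "M = M div g * g" using assms(2) by simp
  ultimately show "\<forall>r. M dvd r * h \<longrightarrow> M div g dvd r"
    by (metis coprime_dvd_mult_left_iff dvd_mult_left)
qed

lemma coprime_iff_coprime_if_dvd_diff: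
  fixes D h H :: "'a::ring_gcd"
  assumes "D dvd H - h"
  shows "coprime D H \<longleftrightarrow> coprime D h"
proof -
  obtain k where "H - h = D * k" using assms by (rule dvdE)
  then have "H = k * D + h" by (simp add: algebra_simps)
  then show ?thesis by (simp add: coprime_iff_gcd_eq_1 gcd_add_mult)
qed

lemma mod_eq_if_int_dvd_diff: "int m dvd int a - int b \<Longrightarrow> a mod m = b mod m"
  by (metis cong_def cong_int_iff cong_iff_dvd_diff)

lemma poly_as_sum_of_monoms_lessThan:
  "degree p < n \<Longrightarrow> (\<Sum>i<n. monom (coeff p i) i) = p"
  by (rule poly_eqI) (auto simp: coeff_sum coeff_eq_0)

lemma degree_xm1:
  assumes "m \<ge> 1"
  shows "degree (xm1 m :: 'a::field poly) = m"
proof -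
  have "xm1 m = monom (1::'a) m + (- 1)" by (simp add: xm1_def)
  also have "degree \<dots> = m"
    using assms by (subst degree_add_eq_left) (auto simp: degree_monom_eq)
  finally show ?thesis .
qed

lemma xm1_neq_0: "m \<ge> 1 \<Longrightarrow> (xm1 m :: 'a::field poly) \<noteq> 0"
  by (metis degree_0 degree_xm1 not_one_le_zero)

lemma xm1_dvd_monom_minus_1:
  assumes "m dvd t"
  shows "xm1 m dvd (monom 1 t - 1 :: 'a::comm_ring_1 poly)"
proof -
  obtain s where "t = m * s" using assms by auto
  then have "monom (1::'a) t - 1 = (monom 1 m) ^ s - 1" by (simp add: monom_power)
  also have "\<dots> = (monom 1 m - 1) * (\<Sum>i<s. (monom 1 m) ^ i)" by (rule power_diff_1_eq)
  finally show ?thesis by (simp add: xm1_def)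
qed

lemma monom_mod_xm1_cong:
  fixes c :: "'a::field"
  assumes "a mod m = b mod m"
  shows "monom c a mod xm1 m = monom c b mod xm1 m"
proof -
  have ordered: "monom c a mod xm1 m = monom c b mod xm1 m" if "a mod m = b mod m" "b \<le> a" for a b
  proof -
    have "xm1 m dvd monom c b * (monom 1 (a - b) - 1)"
      using that by (simp add: xm1_dvd_monom_minus_1 mod_eq_dvd_iff_nat)
    also have "monom c b * (monom 1 (a - b) - 1) = monom c a - monom c b"
      using that(2) by (simp add: algebra_simps mult_monom)
    finally show ?thesis by (simp add: mod_eq_dvd_iff)
  qed
  show ?thesis
  proof (cases "b \<le> a")
    case True
    then show ?thesis by (rule ordered[OF assms])
  next
    case False
    then show ?thesis using ordered[of b a] assms by simp
  qed
qed

lemma monom_mod_xm1: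
  fixes c :: "'a::field"
  assumes "m \<ge> 1"
  shows "monom c n mod xm1 m = monom c (n mod m)"
proof -
  have "monom c n mod xm1 m = monom c (n mod m) mod xm1 m" by (rule monom_mod_xm1_cong) simp
  also have "\<dots> = monom c (n mod m)"
  proof (cases "c = 0")
    case False
    then show ?thesis using assms by (intro mod_poly_less) (simp add: degree_xm1 degree_monom_eq)
  qed simp
  finally show ?thesis .
qed

text \<open>A square factor of \<open>x\<^sup>m - 1\<close> divides \<open>x (x\<^sup>m - 1)' - m (x\<^sup>m - 1) = m\<close>.\<close>
lemma squarefree_xm1:
  assumes "of_nat m \<noteq> (0::'a::field)"
  shows "squarefree (xm1 m :: 'a poly)"
proof (rule squarefreeI)
  fix t :: "'a poly"
  assume "t ^ 2 dvd xm1 m"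
  then obtain k where k: "xm1 m = t * t * k" by (auto simp: power2_eq_square)
  have "pderiv (xm1 m) = t * (pderiv t * k + pderiv (t * k))"
    by (simp add: k pderiv_mult algebra_simps)
  then have "t dvd monom 1 1 * pderiv (xm1 m) - smult (of_nat m) (xm1 m)"
    using k by (intro dvd_diff dvd_mult dvd_smult) simp_all
  moreover have "m \<ge> 1" using assms by (cases m) auto
  then have "monom 1 1 * pderiv (xm1 m :: 'a poly) = monom (of_nat m) m"
    by (simp add: xm1_def pderiv_diff pderiv_monom mult_monom)
  then have "monom 1 1 * pderiv (xm1 m :: 'a poly) - smult (of_nat m) (xm1 m) = [:of_nat m:]"
    by (simp add: xm1_def smult_diff_right smult_monom monom_0)
  moreover have "is_unit [:(of_nat m :: 'a):]"
    using assms by (simp add: is_unit_const_poly_iff dvd_field_iff)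
  ultimately show "is_unit t" by (metis dvd_unit_imp_unit)
qed

locale conj_reciprocal =
  fixes conj :: "'a::field_gcd \<Rightarrow> 'a" and m :: nat
  assumes conj_add: "conj (x + y) = conj x + conj y"
    and conj_mult: "conj (x * y) = conj x * conj y"
    and conj_conj [simp]: "conj (conj x) = x"
    and m_pos: "m \<ge> 1"
begin

abbreviation M :: "'a poly" where "M \<equiv> xm1 m"

lemma degree_mod_xm1_less: "degree (f mod M) < m"
  using degree_mod_less[OF xm1_neq_0[OF m_pos], of f] m_pos by (auto simp: degree_xm1)

lemma conj_0 [simp]: "conj 0 = 0"
  by (metis add.right_neutral add_left_cancel conj_add)

lemma conj_eq_0_iff [simp]: "conj x = 0 \<longleftrightarrow> x = 0"
  by (metis conj_0 conj_conj)

lemma conj_1 [simp]: "conj 1 = 1"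
proof -
  have "conj 1 * conj 1 = conj 1 * 1" using conj_mult[of 1 1] by simp
  then show ?thesis by (subst (asm) mult_left_cancel) simp_all
qed

lemma conj_sum: "conj (sum f A) = (\<Sum>i\<in>A. conj (f i))"
  by (induction A rule: infinite_finite_induct) (simp_all add: conj_add)

definition conj_poly :: "'a poly \<Rightarrow> 'a poly" where
  "conj_poly f = map_poly conj f"

lemma coeff_conj_poly [simp]: "coeff (conj_poly f) n = conj (coeff f n)"
  by (simp add: conj_poly_def coeff_map_poly)

lemma conj_poly_add: "conj_poly (f + g) = conj_poly f + conj_poly g"
  by (rule poly_eqI) (simp add: conj_add)

lemma conj_poly_mult: "conj_poly (f * g) = conj_poly f * conj_poly g"
  by (rule poly_eqI) (simp add: coeff_mult conj_sum conj_mult)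

lemma conj_poly_monom: "conj_poly (monom c n) = monom (conj c) n"
  by (simp add: conj_poly_def map_poly_monom)

text \<open>As \<open>x ^ (m - 1)\<close> is the inverse of \<open>x\<close> modulo \<open>x\<^sup>m - 1\<close>, this is the conjugate
  reciprocal \<open>f\<^sup>[\<^sup>q\<^sup>](x\<^sup>-\<^sup>1)\<close> read in \<open>R\<close>.\<close>
definition conj_recip :: "'a poly \<Rightarrow> 'a poly" where
  "conj_recip f = conj_poly f \<circ>\<^sub>p monom 1 (m - 1)"

lemma conj_recip_add: "conj_recip (f + g) = conj_recip f + conj_recip g"
  by (simp add: conj_recip_def conj_poly_add pcompose_add)

lemma conj_recip_mult: "conj_recip (f * g) = conj_recip f * conj_recip g"
  by (simp add: conj_recip_def conj_poly_mult pcompose_mult)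

lemma conj_recip_0 [simp]: "conj_recip 0 = 0"
  by (simp add: conj_recip_def conj_poly_def)

lemma conj_recip_minus: "conj_recip (- f) = - conj_recip f"
  using conj_recip_add[of f "- f"] by (simp add: eq_neg_iff_add_eq_0 add.commute)

lemma conj_recip_diff: "conj_recip (f - g) = conj_recip f - conj_recip g"
  using conj_recip_add[of f "- g"] by (simp add: conj_recip_minus)

lemma conj_recip_sum: "conj_recip (sum f A) = (\<Sum>i\<in>A. conj_recip (f i))"
  by (induction A rule: infinite_finite_induct) (simp_all add: conj_recip_add)

lemma conj_recip_monom: "conj_recip (monom c n) = monom (conj c) (n * (m - 1))"
proof -
  have "monom d k \<circ>\<^sub>p r = smult d (r ^ k)" for d k and r :: "'a poly"
  proof -
    have "[:0, 1:] ^ k \<circ>\<^sub>p r = r ^ k"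
      by (induction k) (simp_all add: pcompose_pCons pcompose_1)
    then show ?thesis by (simp add: monom_altdef pcompose_smult)
  qed
  then show ?thesis
    by (simp add: conj_recip_def conj_poly_monom monom_power smult_monom mult.commute)
qed

lemma conj_recip_1: "conj_recip 1 = 1"
  using conj_recip_monom[of 1 0] by (simp add: monom_0 one_pCons)

lemma xm1_dvd_conj_recip_xm1: "M dvd conj_recip M"
proof -
  have "conj_recip M = monom 1 (m * (m - 1)) - 1"
    by (simp add: xm1_def conj_recip_diff conj_recip_monom conj_recip_1)
  then show ?thesis by (simp add: xm1_dvd_monom_minus_1)
qed

lemma conj_recip_mod_cong: "f mod M = g mod M \<Longrightarrow> conj_recip f mod M = conj_recip g mod M"
proof -
  assume "f mod M = g mod M"
  then obtain k where "f - g = M * k" by (auto simp: mod_eq_dvd_iff)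
  then have "conj_recip f - conj_recip g = conj_recip M * conj_recip k"
    by (simp flip: conj_recip_diff conj_recip_mult)
  then have "M dvd conj_recip f - conj_recip g" using xm1_dvd_conj_recip_xm1 by simp
  then show ?thesis by (simp add: mod_eq_dvd_iff)
qed

lemma conj_recip_conj_recip_mod: "conj_recip (conj_recip f) mod M = f mod M"
proof -
  have "conj_recip (conj_recip f) = (\<Sum>i\<le>degree f. monom (coeff f i) (i * (m - 1) * (m - 1)))"
    by (subst (2) poly_as_sum_of_monoms[symmetric]) (simp add: conj_recip_sum conj_recip_monom)
  also have "\<dots> mod M = (\<Sum>i\<le>degree f. monom (coeff f i) (i * (m - 1) * (m - 1)) mod M) mod M"
    by (simp add: mod_sum_eq)
  also have "(\<Sum>i\<le>degree f. monom (coeff f i) (i * (m - 1) * (m - 1)) mod M)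
      = (\<Sum>i\<le>degree f. monom (coeff f i) i mod M)"
  proof (intro sum.cong refl monom_mod_xm1_cong mod_eq_if_int_dvd_diff)
    fix i
    have "int (m - 1) = int m - 1" using m_pos by simp
    then have "int (i * (m - 1) * (m - 1)) - int i = int m * (int i * (int m - 2))"
      by (simp only: of_nat_mult) (simp add: algebra_simps)
    then show "int m dvd int (i * (m - 1) * (m - 1)) - int i" by simp
  qed
  also have "(\<Sum>i\<le>degree f. monom (coeff f i) i mod M) mod M = f mod M"
    by (simp add: mod_sum_eq poly_as_sum_of_monoms)
  finally show ?thesis .
qed

lemma xm1_dvd_conj_recip_iff: "M dvd conj_recip f \<longleftrightarrow> M dvd f"
proof
  assume "M dvd conj_recip f"
  then have "conj_recip (conj_recip f) mod M = conj_recip 0 mod M"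
    by (intro conj_recip_mod_cong) (simp add: mod_eq_0_iff_dvd)
  then show "M dvd f" by (simp add: conj_recip_conj_recip_mod mod_eq_0_iff_dvd)
next
  assume "M dvd f"
  then have "conj_recip f mod M = conj_recip 0 mod M"
    by (intro conj_recip_mod_cong) (simp add: mod_eq_0_iff_dvd)
  then show "M dvd conj_recip f" by (simp add: mod_eq_0_iff_dvd)
qed

lemma conj_recip_mult_conj_recip_mod:
  "conj_recip (f * conj_recip f) mod M = (f * conj_recip f) mod M"
proof -
  have "conj_recip (f * conj_recip f) mod M = (conj_recip f * conj_recip (conj_recip f)) mod M"
    by (simp add: conj_recip_mult)
  also have "\<dots> = (conj_recip f * f) mod M"
    by (rule mod_mult_cong) (simp_all add: conj_recip_conj_recip_mod)
  finally show ?thesis by (simp add: mult.commute)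
qed

definition const_coeff :: "'a poly \<Rightarrow> 'a" where
  "const_coeff f = coeff (f mod M) 0"

lemma const_coeff_0 [simp]: "const_coeff 0 = 0"
  by (simp add: const_coeff_def)

lemma const_coeff_add: "const_coeff (f + g) = const_coeff f + const_coeff g"
  by (simp add: const_coeff_def poly_mod_add_left)

lemma const_coeff_sum: "const_coeff (sum f A) = (\<Sum>i\<in>A. const_coeff (f i))"
  by (induction A rule: infinite_finite_induct) (simp_all add: const_coeff_add)

lemma const_coeff_monom: "const_coeff (monom c n) = (if m dvd n then c else 0)"
  using m_pos by (simp add: const_coeff_def monom_mod_xm1 mod_eq_0_iff_dvd)

lemma dvd_add_mult_pred_iff:
  assumes "i < m" "j < m"
  shows "m dvd i + j * (m - 1) \<longleftrightarrow> i = j"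
proof -
  have "int (m - 1) = int m - 1" using m_pos by simp
  then have "int (i + j * (m - 1)) = (int i - int j) + int m * int j"
    by (simp only: of_nat_add of_nat_mult) (simp add: algebra_simps)
  then have "m dvd i + j * (m - 1) \<longleftrightarrow> int m dvd (int i - int j) + int m * int j"
    by (metis of_nat_dvd_iff)
  also have "\<dots> \<longleftrightarrow> int m dvd int i - int j" by (simp add: dvd_add_left_iff)
  also have "\<dots> \<longleftrightarrow> i = j"
  proof
    assume "int m dvd int i - int j"
    moreover have "\<bar>int i - int j\<bar> < int m" using assms by linarith
    ultimately show "i = j" using dvd_imp_le_int[of "int i - int j" "int m"] by fastforce
  qed simp
  finally show ?thesis .
qed

text \<open>Only the pairs of exponents with \<open>i + j (m - 1) \<equiv> 0 (mod m)\<close>, i.e.\ \<open>i = j\<close>,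
  contribute to the constant term.\<close>
lemma const_coeff_mult_conj_recip:
  assumes "degree a < m" "degree b < m"
  shows "const_coeff (a * conj_recip b) = (\<Sum>k<m. coeff a k * conj (coeff b k))"
proof -
  have "a * conj_recip b
      = (\<Sum>i<m. monom (coeff a i) i) * conj_recip (\<Sum>j<m. monom (coeff b j) j)"
    using assms by (simp add: poly_as_sum_of_monoms_lessThan)
  also have "\<dots> = (\<Sum>i<m. \<Sum>j<m. monom (coeff a i * conj (coeff b j)) (i + j * (m - 1)))"
    by (simp add: conj_recip_sum conj_recip_monom sum_product mult_monom)
  finally have "const_coeff (a * conj_recip b)
      = (\<Sum>i<m. \<Sum>j<m. if m dvd i + j * (m - 1) then coeff a i * conj (coeff b j) else 0)"
    by (simp add: const_coeff_sum const_coeff_monom)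
  also have "\<dots> = (\<Sum>i<m. \<Sum>j<m. if i = j then coeff a i * conj (coeff b j) else 0)"
    by (intro sum.cong refl) (use dvd_add_mult_pred_iff in auto)
  finally show ?thesis by simp
qed

lemma xm1_dvd_if_const_coeff_mult_eq_0:
  assumes "\<And>a. degree a < m \<Longrightarrow> const_coeff (a * w) = 0"
  shows "M dvd w"
proof -
  define b where "b = conj_recip w mod M"
  have deg_b: "degree b < m" by (simp add: b_def degree_mod_xm1_less)
  have conj_recip_b: "conj_recip b mod M = w mod M"
    unfolding b_def using conj_recip_mod_cong[of "conj_recip w mod M" "conj_recip w"]
    by (simp add: conj_recip_conj_recip_mod)
  have "coeff b i = 0" for i
  proof (cases "i < m")
    case True
    have deg_x: "degree (monom (1::'a) i) < m" using True by (simp add: degree_monom_eq)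
    have "(monom 1 i * w) mod M = (monom 1 i * conj_recip b) mod M"
      by (rule mod_mult_cong) (simp_all add: conj_recip_b)
    then have "const_coeff (monom 1 i * w) = const_coeff (monom 1 i * conj_recip b)"
      by (simp add: const_coeff_def)
    also have "\<dots> = (\<Sum>k<m. coeff (monom 1 i) k * conj (coeff b k))"
      by (rule const_coeff_mult_conj_recip[OF deg_x deg_b])
    also have "\<dots> = (\<Sum>k<m. if k = i then conj (coeff b k) else 0)"
      by (rule sum.cong) auto
    also have "\<dots> = conj (coeff b i)" using True by simp
    finally show ?thesis using assms[OF deg_x] by simp
  next
    case False
    then show ?thesis using deg_b by (simp add: coeff_eq_0)
  qed
  then have "b = 0" by (simp add: poly_eqI)
  then show ?thesis using conj_recip_b by (simp add: mod_eq_0_iff_dvd)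
qed

end

locale hermitian = conj_reciprocal conj m for conj :: "'a::field_gcd \<Rightarrow> 'a" and m +
  fixes q :: nat
  assumes conj_eq_power: "conj c = c ^ q"
begin

lemma hat_poly_mod_xm1:
  assumes "degree f \<le> m"
  shows "hat_poly q m f mod M = conj_recip f mod M"
proof -
  have "hat_poly q m f = (\<Sum>j\<le>m. monom (conj (coeff f j)) (m - j))"
    unfolding hat_poly_def conj_eq_power
    by (rule sum.reindex_bij_witness[of _ "\<lambda>j. m - j" "\<lambda>j. m - j"]) auto
  also have "\<dots> mod M = (\<Sum>j\<le>m. monom (conj (coeff f j)) (m - j) mod M) mod M"
    by (simp add: mod_sum_eq)
  also have "(\<Sum>j\<le>m. monom (conj (coeff f j)) (m - j) mod M)
      = (\<Sum>j\<le>m. monom (conj (coeff f j)) (j * (m - 1)) mod M)"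
  proof (intro sum.cong refl monom_mod_xm1_cong mod_eq_if_int_dvd_diff)
    fix j assume "j \<in> {..m}"
    then have "int (m - j) = int m - int j" by simp
    moreover have "int (m - 1) = int m - 1" using m_pos by simp
    ultimately have "int (m - j) - int (j * (m - 1)) = int m * (1 - int j)"
      by (simp only: of_nat_mult) (simp add: algebra_simps)
    then show "int m dvd int (m - j) - int (j * (m - 1))" by simp
  qed
  also have "(\<Sum>j\<le>m. monom (conj (coeff f j)) (j * (m - 1)) mod M) mod M = conj_recip f mod M"
    by (subst (2) poly_as_sum_of_monoms'[OF assms, symmetric])
      (simp add: mod_sum_eq conj_recip_sum conj_recip_monom)
  finally show ?thesis .
qed

lemma herm_ip_eq_const_coeff:
  assumes "degree u1 < m" "degree u2 < m" "degree v1 < m" "degree v2 < m"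
  shows "herm_ip q m (u1, u2) (v1, v2) = const_coeff (u1 * conj_recip v1 + u2 * conj_recip v2)"
  using assms by (simp add: herm_ip_def const_coeff_add const_coeff_mult_conj_recip conj_eq_power)

lemma herm_orthogonal_qc_code_iff:
  assumes "degree v1 < m" "degree v2 < m"
  shows "(\<forall>c\<in>qc_code_1gen m g1 g2. herm_ip q m c (v1, v2) = 0) \<longleftrightarrow>
    M dvd g1 * conj_recip v1 + g2 * conj_recip v2"
proof -
  let ?w = "g1 * conj_recip v1 + g2 * conj_recip v2"
  have herm_ip_codeword: "herm_ip q m ((a * g1) mod M, (a * g2) mod M) (v1, v2) = const_coeff (a * ?w)"
    for a
  proof -
    have "M dvd ((a * g1) mod M - a * g1) * conj_recip v1 + ((a * g2) mod M - a * g2) * conj_recip v2"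
      by (intro dvd_add dvd_mult2) (simp_all flip: mod_eq_dvd_iff)
    then have "((a * g1) mod M * conj_recip v1 + (a * g2) mod M * conj_recip v2) mod M
        = (a * ?w) mod M"
      by (simp add: mod_eq_dvd_iff algebra_simps)
    then show ?thesis
      using assms by (simp add: herm_ip_eq_const_coeff degree_mod_xm1_less const_coeff_def)
  qed
  show ?thesis
  proof
    assume orthogonal: "\<forall>c\<in>qc_code_1gen m g1 g2. herm_ip q m c (v1, v2) = 0"
    have "const_coeff (a * ?w) = 0" if "degree a < m" for a
    proof -
      have "((a * g1) mod M, (a * g2) mod M) \<in> qc_code_1gen m g1 g2"
        using that by (auto simp: qc_code_1gen_def Rset_def)
      then show ?thesis using orthogonal herm_ip_codeword[of a] by simp
    qed
    then show "M dvd ?w" by (rule xm1_dvd_if_const_coeff_mult_eq_0)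
  next
    assume "M dvd ?w"
    then have "const_coeff (a * ?w) = 0" for a by (simp add: const_coeff_def)
    then show "\<forall>c\<in>qc_code_1gen m g1 g2. herm_ip q m c (v1, v2) = 0"
      by (auto simp: qc_code_1gen_def herm_ip_codeword)
  qed
qed

text \<open>The key point is that \<open>h = g\<^sub>1 g\<^sub>1\<^sup>* + g\<^sub>2 g\<^sub>2\<^sup>*\<close> is self-conjugate, so that
  \<open>a\<^sup>* h\<close> and \<open>a h\<close> are conjugate modulo \<open>x\<^sup>m - 1\<close>.\<close>
lemma codeword_in_herm_dual_iff:
  "((a * g1) mod M, (a * g2) mod M) \<in> herm_dual q m (qc_code_1gen m g1 g2) \<longleftrightarrow>
    M dvd a * (g1 * conj_recip g1 + g2 * conj_recip g2)"
proof -
  let ?h = "g1 * conj_recip g1 + g2 * conj_recip g2"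
  have "(g1 * conj_recip ((a * g1) mod M) + g2 * conj_recip ((a * g2) mod M)) mod M
      = (g1 * conj_recip (a * g1) + g2 * conj_recip (a * g2)) mod M"
    by (intro mod_add_cong mod_mult_cong refl conj_recip_mod_cong) simp_all
  also have "g1 * conj_recip (a * g1) + g2 * conj_recip (a * g2) = conj_recip a * ?h"
    by (simp add: conj_recip_mult algebra_simps)
  finally have "M dvd g1 * conj_recip ((a * g1) mod M) + g2 * conj_recip ((a * g2) mod M)
      \<longleftrightarrow> M dvd conj_recip a * ?h"
    by (metis dvd_eq_mod_eq_0)
  also have "\<dots> \<longleftrightarrow> M dvd conj_recip (conj_recip a * ?h)"
    by (simp add: xm1_dvd_conj_recip_iff)
  moreover have "conj_recip (conj_recip a * ?h) mod M = (a * ?h) mod M"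
  proof -
    have "conj_recip ?h mod M = ?h mod M"
      unfolding conj_recip_add
      by (intro mod_add_cong conj_recip_mult_conj_recip_mod)
    then show ?thesis
      unfolding conj_recip_mult by (intro mod_mult_cong conj_recip_conj_recip_mod)
  qed
  ultimately show ?thesis
    by (simp add: herm_dual_def Rset_def degree_mod_xm1_less herm_orthogonal_qc_code_iff
        mod_eq_0_iff_dvd[symmetric])
qed

lemma herm_LCD_qc_code_iff_annihilator:
  "herm_LCD q m (qc_code_1gen m g1 g2) \<longleftrightarrow>
    (\<forall>a. M dvd a * (g1 * conj_recip g1 + g2 * conj_recip g2) \<longrightarrow> M dvd a * g1 \<and> M dvd a * g2)"
  (is "_ \<longleftrightarrow> (\<forall>a. M dvd a * ?h \<longrightarrow> _)")
proof -
  let ?C = "qc_code_1gen m g1 g2"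
  let ?c = "\<lambda>a. ((a * g1) mod M, (a * g2) mod M)"
  let ?S = "{a. degree a < m \<and> M dvd a * ?h}"
  have reduce: "M dvd a * g \<longleftrightarrow> M dvd (a mod M) * g" for a g
    by (metis dvd_eq_mod_eq_0 mod_mult_left_eq)
  define dual where "dual = herm_dual q m ?C"
  have dual_iff: "?c a \<in> dual \<longleftrightarrow> M dvd a * ?h" for a
    unfolding dual_def by (rule codeword_in_herm_dual_iff)
  have zero_iff: "?c a = (0, 0) \<longleftrightarrow> M dvd a * g1 \<and> M dvd a * g2" for a
    by (simp add: mod_eq_0_iff_dvd)
  have "?C = ?c ` {a. degree a < m}"
    by (auto simp: qc_code_1gen_def Rset_def)
  then have "?C \<inter> dual = ?c ` ?S"
    using dual_iff by auto
  then have "herm_LCD q m ?C \<longleftrightarrow> ?c ` ?S = {(0, 0)}"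
    unfolding herm_LCD_def dual_def[symmetric] by simp
  also have "\<dots> \<longleftrightarrow> (\<forall>a\<in>?S. ?c a = (0, 0))"
  proof
    assume "\<forall>a\<in>?S. ?c a = (0, 0)"
    then have "?c ` ?S = (\<lambda>_. (0, 0)) ` ?S" by (intro image_cong) simp_all
    also have "\<dots> = {(0, 0)}" by (rule image_constant[of 0]) (use m_pos in simp)
    finally show "?c ` ?S = {(0, 0)}" .
  qed blast
  also have "\<dots> \<longleftrightarrow> (\<forall>a. M dvd a * ?h \<longrightarrow> M dvd a * g1 \<and> M dvd a * g2)"
  proof
    assume vanish: "\<forall>a\<in>?S. ?c a = (0, 0)"
    show "\<forall>a. M dvd a * ?h \<longrightarrow> M dvd a * g1 \<and> M dvd a * g2"
    proof (intro allI impI)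
      fix a
      assume "M dvd a * ?h"
      then have "?c (a mod M) = (0, 0)"
        using vanish degree_mod_xm1_less reduce[of a ?h] by blast
      then show "M dvd a * g1 \<and> M dvd a * g2"
        using zero_iff[of "a mod M"] reduce[of a g1] reduce[of a g2] by blast
    qed
  qed (use zero_iff in blast)
  finally show ?thesis .
qed

lemma herm_LCD_qc_code_iff:
  assumes "squarefree M" and "g1 dvd M" and "degree g2 < m"
  shows "herm_LCD q m (qc_code_1gen m g1 g2) \<longleftrightarrow>
    gcd (M div gcd g1 g2) (g1 * hat_poly q m g1 + g2 * hat_poly q m g2) = 1"
proof -
  let ?D = "M div gcd g1 g2"
  let ?h = "g1 * conj_recip g1 + g2 * conj_recip g2"
  let ?H = "g1 * hat_poly q m g1 + g2 * hat_poly q m g2"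
  have "degree g1 \<le> m"
    using dvd_imp_degree_le[OF assms(2) xm1_neq_0[OF m_pos]] m_pos by (simp add: degree_xm1)
  then have "M dvd g1 * (hat_poly q m g1 - conj_recip g1) + g2 * (hat_poly q m g2 - conj_recip g2)"
    using assms(3) hat_poly_mod_xm1[of g1] hat_poly_mod_xm1[of g2]
    by (intro dvd_add dvd_mult) (simp_all add: mod_eq_dvd_iff)
  then have "M dvd ?H - ?h" by (simp add: algebra_simps)
  moreover have "gcd g1 g2 dvd M" using assms(2) by (rule dvd_trans[OF gcd_dvd1])
  then have "?D dvd M" by (metis dvd_div_mult_self dvd_triv_left)
  ultimately have "?D dvd ?H - ?h" by (rule dvd_trans[rotated])
  have "herm_LCD q m (qc_code_1gen m g1 g2) \<longleftrightarrow> (\<forall>a. M dvd a * ?h \<longrightarrow> ?D dvd a)"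
    using dvd_mult_both_iff_div_gcd_dvd[OF assms(2) xm1_neq_0[OF m_pos]]
    by (simp add: herm_LCD_qc_code_iff_annihilator)
  also have "\<dots> \<longleftrightarrow> coprime ?D ?h"
    using assms(1) \<open>gcd g1 g2 dvd M\<close> by (rule squarefree_annihilator_iff_coprime)
  also have "\<dots> \<longleftrightarrow> gcd ?D ?H = 1"
    using \<open>?D dvd ?H - ?h\<close> by (simp add: coprime_iff_coprime_if_dvd_diff flip: coprime_iff_gcd_eq_1)
  finally show ?thesis .
qed

end

lemma prime_power_card_square_imp_CHAR_power:
  assumes "prime_power q" and "card (UNIV :: 'a::{finite,field} set) = q ^ 2"
  shows "\<exists>k>0. q = CHAR('a) ^ k"
proof -
  obtain p k where p: "prime p" "k > 0" "q = p ^ k"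
    using assms(1) by (auto simp: prime_power_def)
  have "prime CHAR('a)" by (intro prime_CHAR_semidom finite_imp_CHAR_pos) simp
  moreover have "CHAR('a) dvd p ^ (k * 2)"
    using CHAR_dvd_CARD[where 'a = 'a] assms(2) p(3) by (simp add: power_mult)
  ultimately have "CHAR('a) = p"
    using p(1) by (metis prime_dvd_power primes_dvd_imp_eq)
  then show ?thesis using p by blast
qed

theorem theorem6p4:
  fixes q m :: nat and g11 g12 :: "'a::{finite,field_gcd} poly"
  assumes "prime_power q"
    and "card (UNIV :: 'a set) = q ^ 2"
    and "m \<ge> 1"
    and "coprime q m"
    and "g11 dvd xm1 m"
    and "degree g12 < m"
  shows "herm_LCD q m (qc_code_1gen m g11 g12) \<longleftrightarrow>
    gcd (xm1 m div gcd g11 g12)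
        (g11 * hat_poly q m g11 + g12 * hat_poly q m g12) = 1"
proof -
  obtain k where "k > 0" and q: "q = CHAR('a) ^ k"
    using prime_power_card_square_imp_CHAR_power assms(1,2) by blast
  have char: "prime CHAR('a)" by (intro prime_CHAR_semidom finite_imp_CHAR_pos) simp
  interpret hermitian "\<lambda>c::'a. c ^ q" m q
  proof
    show "(x + y) ^ q = x ^ q + y ^ q" for x y :: 'a
      using char q by (rule freshmans_dream')
    show "(x ^ q) ^ q = x" for x :: 'a
      using finite_field_power_card_eq_self[of x] assms(2)
      by (simp add: power2_eq_square flip: power_mult)
  qed (use assms(3) in \<open>simp_all add: power_mult_distrib\<close>)
  have "of_nat m \<noteq> (0::'a)"
  proof
    assume "of_nat m = (0::'a)"
    then have "CHAR('a) dvd gcd q m" using q \<open>k > 0\<close> by (simp add: of_nat_eq_0_iff_char_dvd)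
    then show False using char assms(4) by simp
  qed
  show ?thesis
    by (rule herm_LCD_qc_code_iff[OF squarefree_xm1[OF \<open>of_nat m \<noteq> 0\<close>] assms(5,6)])
qed

end
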